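(* For every generator $(v_0,v_1,v_2,v_3)$ of $C_3^{h\neq}(V)$ one has $$\nu\big(\widehat\sigma(v_0,v_1,v_2,v_3)\big)=\mu\big(\partial(v_0,v_1,v_2,v_3)\big)\quad\text{in } \mathbb C\wedge_{\mathbb Z}\mathbb C,$$ where $\mu$ is extended linearly. Consequently, $\widehat\sigma$ maps the $3$-cycles of $C_*^{h\neq}(V)_G$ into $\ker\nu$. Given that $\widehat\sigma$ kills boundaries in $\widehat{\mathcal P}(\mathbb C)$, it therefore induces a homomorphism $H_3^{h\neq}(V)\to\widehat{\mathcal B}(\mathbb C)$.
   Context: Let $V=(\mathbb C^2\setminus\{0\})/\pm$, let $G=\mathrm{PSL}(2,\mathbb C)$ act on $V$ on the left by matrix multiplication, and let $h:V\to\mathbb CP^1$ be $h(\pm(\alpha,\beta)^T)=\alpha/\beta$. For $n\ge 0$ let $C_n(V)$ be the free abelian group on $(n+1)$-tuples of elements of $V$, with boundary $\partial(v_0,\dots,v_n)=\sum_{i=0}^n(-1)^i(v_0,\dots,\widehat{v_i},\dots,v_n)$ and the diagonal left $G$-action. Let $C_n^{h\neq}(V)$ be the subcomplex spanned by tuples whose $h(v_i)$ are pairwise distinct. Let $C_n^{h\neq}(V)_G=\mathbb Z\otimes_{\mathbb Z[G]}C_n^{h\neq}(V)$, and let $H_n^{h\neq}(V)$ denote its homology. For $v_i,v_j\in V$ with $h(v_i)\ne h(v_j)$, $\det(v_i,v_j)$ denotes the determinant of the $2\times2$ matrix whose columns are representatives of $v_i,v_j$. It is nonzero and defined up to sign;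 fix the sign by requiring $0\le\arg\det(v_i,v_j)<\pi$. Put $c_{ij}=\mathrm{Log}\det(v_i,v_j)$ (principal branch). This is invariant under $G$. Define $\widehat\sigma(v_0,v_1,v_2,v_3)=(w_0,w_1,w_2)$, where - $w_0=c_{03}+c_{12}-c_{02}-c_{13}$, - $w_1=c_{02}+c_{13}-c_{01}-c_{23}$, - $w_2=c_{01}+c_{23}-c_{03}-c_{12}$. This triple is a combinatorial flattening of the cross ratio $z=[h(v_0):h(v_1):h(v_2):h(v_3)]$, where $[a:b:c:d]=\frac{(a-d)(b-c)}{(b-d)(a-c)}$. It defines a map $C_3^{h\neq}(V)_G\to\widehat{\mathcal P}(\mathbb C)$. Here $\widehat{\mathcal P}(\mathbb C)$ is Neumann's extended pre-Bloch group. It is the free abelian group on combinatorial flattenings $[z;p,q]=(w_0,w_1,w_2)$, where $z\in\mathbb C\setminus\{0,1\}$, $p,q\in\mathbb Z$, $w_0=\mathrm{Log}z+p\pi i$, $w_1=-\mathrm{Log}(1-z)+q\pi i$, and $w_0+w_1+w_2=0$, taken modulo Neumann's lifted five-term relations. The map $\nu:\widehat{\mathcal P}(\mathbb C)\to\mathbb C\wedge_{\mathbb Z}\mathbb C$ is $\nu(w_0,w_1,w_2)=w_0\wedge w_1$, and $\widehat{\mathcal B}(\mathbb C)=\ker\nu$. Define $\mu:C_2^{h\neq}(V)_G\to\mathbb C\wedge_{\mathbb Z}\mathbb C$ by $\mu(v_0,v_1,v_2)=c_{01}\wedge c_{02}-c_{01}\wedge c_{12}+c_{02}\wedge c_{12}$.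 *)

theory Defs
  imports "HOL-Analysis.Analysis"
begin

(* Points of C^2 \ {0}; an element of V = (C^2\{0})/+- is represented by any of
   its two representatives; all notions below are representative-independent
   or are quotiented by the sign flips explicitly (see flip relation). *)
type_synonym vec = "complex \<times> complex"

definition vneg :: "vec \<Rightarrow> vec" where
  "vneg v = (- fst v, - snd v)"

(* CP^1 = C \<union> {\<infinity>}, with None = \<infinity> *)
definition hmap :: "vec \<Rightarrow> complex option" where
  "hmap v = (if snd v = 0 then None else Some (fst v / snd v))"

definition det2 :: "vec \<Rightarrow> vec \<Rightarrow> complex" where
  "det2 v w = fst v * snd w - fst w * snd v"

definition ndet :: "vec \<Rightarrow> vec \<Rightarrow> complex" where
  "ndet v w = (if 0 \<le> Arg (det2 v w) \<and> Arg (det2 v w) < pi then det2 v w else - det2 v w)"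

definition cc :: "vec \<Rightarrow> vec \<Rightarrow> complex" where
  "cc v w = Ln (ndet v w)"

(* generators of C_n^{h\<noteq>}(V): (n+1)-tuples of nonzero vectors with pairwise distinct h *)
definition hgen :: "nat \<Rightarrow> vec list \<Rightarrow> bool" where
  "hgen n t \<longleftrightarrow> length t = Suc n \<and> (\<forall>i<length t. t ! i \<noteq> (0, 0))
      \<and> (\<forall>i<length t. \<forall>j<length t. i \<noteq> j \<longrightarrow> hmap (t ! i) \<noteq> hmap (t ! j))"

(* formal Z-combinations of pairs; a \<wedge> b is the class of wg a b *)
type_synonym wsum = "complex \<times> complex \<Rightarrow> int"

definition wg :: "complex \<Rightarrow> complex \<Rightarrow> wsum" where
  "wg a b = (\<lambda>p. if p = (a, b) then 1 else 0)"

inductive_set wedge_rel :: "wsum set" where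
  wr_zero: "(\<lambda>_. 0) \<in> wedge_rel"
| wr_add: "x \<in> wedge_rel \<Longrightarrow> y \<in> wedge_rel \<Longrightarrow> (\<lambda>p. x p + y p) \<in> wedge_rel"
| wr_neg: "x \<in> wedge_rel \<Longrightarrow> (\<lambda>p. - x p) \<in> wedge_rel"
| wr_lin1: "(\<lambda>p. wg (a + b) c p - wg a c p - wg b c p) \<in> wedge_rel"
| wr_lin2: "(\<lambda>p. wg a (b + c) p - wg a b p - wg a c p) \<in> wedge_rel"
| wr_alt: "wg a a \<in> wedge_rel"

definition wedge_eq :: "wsum \<Rightarrow> wsum \<Rightarrow> bool" where
  "wedge_eq x y \<longleftrightarrow> (\<lambda>p. x p - y p) \<in> wedge_rel"

type_synonym chain = "vec list \<Rightarrow> int"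

definition supp :: "chain \<Rightarrow> vec list set" where
  "supp z = {t. z t \<noteq> 0}"

definition single :: "vec list \<Rightarrow> chain" where
  "single t = (\<lambda>s. if s = t then 1 else 0)"

definition del_nth :: "nat \<Rightarrow> 'a list \<Rightarrow> 'a list" where
  "del_nth i t = take i t @ drop (Suc i) t"

(* boundary, extended linearly (z of finite support) *)
definition bd :: "chain \<Rightarrow> chain" where
  "bd z = (\<lambda>s. \<Sum>t\<in>supp z. \<Sum>i<length t.
              if del_nth i t = s then (-1) ^ i * z t else 0)"

definition mu_tuple :: "vec list \<Rightarrow> wsum" where
  "mu_tuple t = (let c = (\<lambda>i j. cc (t ! i) (t ! j)) in
     (\<lambda>p. wg (c 0 1) (c 0 2) p - wg (c 0 1) (c 1 2) p + wg (c 0 2) (c 1 2) p))"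

definition mu_lin :: "chain \<Rightarrow> wsum" where
  "mu_lin z = (\<lambda>p. \<Sum>s\<in>supp z. z s * mu_tuple s p)"

definition sigma_hat :: "vec list \<Rightarrow> complex \<times> complex \<times> complex" where
  "sigma_hat t = (let c = (\<lambda>i j. cc (t ! i) (t ! j)) in
     (c 0 3 + c 1 2 - c 0 2 - c 1 3,
      c 0 2 + c 1 3 - c 0 1 - c 2 3,
      c 0 1 + c 2 3 - c 0 3 - c 1 2))"

definition nu :: "complex \<times> complex \<times> complex \<Rightarrow> wsum" where
  "nu w = wg (fst w) (fst (snd w))"

(* SL(2,C) matrix (a,b,c,d) = [[a,b],[c,d]]; PSL(2,C) acts on V through it *)
definition act :: "complex \<times> complex \<times> complex \<times> complex \<Rightarrow> vec \<Rightarrow> vec" where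
  "act g v = (case g of (a, b, c, d) \<Rightarrow> (a * fst v + b * snd v, c * fst v + d * snd v))"

definition SL2 :: "(complex \<times> complex \<times> complex \<times> complex) set" where
  "SL2 = {(a, b, c, d). a * d - b * c = 1}"

(* chains over representatives that vanish in C_n^{h\<noteq>}(V)_G: generated by
   sign changes of a single entry (passage to V) and by x - g.x (coinvariants) *)
inductive_set coinv_rel :: "nat \<Rightarrow> chain set" for n :: nat where
  cr_zero: "(\<lambda>_. 0) \<in> coinv_rel n"
| cr_add: "x \<in> coinv_rel n \<Longrightarrow> y \<in> coinv_rel n \<Longrightarrow> (\<lambda>s. x s + y s) \<in> coinv_rel n"
| cr_neg: "x \<in> coinv_rel n \<Longrightarrow> (\<lambda>s. - x s) \<in> coinv_rel n"
| cr_act: "hgen n t \<Longrightarrow> g \<in> SL2 \<Longrightarrow>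
     (\<lambda>s. single t s - single (map (act g) t) s) \<in> coinv_rel n"
| cr_flip: "hgen n t \<Longrightarrow> i < length t \<Longrightarrow>
     (\<lambda>s. single t s - single (t[i := vneg (t ! i)]) s) \<in> coinv_rel n"

end

theory Submission
  imports Defs "HOL-Library.Function_Algebras"
begin

(* Writing
   c_ij = cc v_i v_j, the flattening component w0 \<wedge> w1 expands by bilinearity
   and antisymmetry into exactly the alternating sum of the four values of mu on
   the faces of (v0,v1,v2,v3); this is the purely algebraic lemma
   flattening_wedge_identity, proved in a quotient group wedge = wsum / wedge_rel
   in which a \<wedge> b becomes the bilinear alternating map W.

   For the second claim we extend this identity linearly to chains (mu_lin and
   the boundary bd are linear on finitely supported chains) and show that mu
   vanishes on the relations coinv_rel 2 defining the coinvariants: the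
   normalised determinant, hence every c_ij, is unchanged by a sign change of a
   representative and by the action of SL(2,C).  So for a chain z whose
   boundary is zero in C_2^{h\<noteq>}(V)_G, the sum of nu(sigma_hat t) equals
   mu(bd z) = 0 in C \<wedge>_Z C, i.e. it lies in wedge_rel. *)

section \<open>The exterior square as a quotient group\<close>

lemma wr_0: "(0::wsum) \<in> wedge_rel"
  using wr_zero by (simp add: zero_fun_def)

lemma wr_plus: "x \<in> wedge_rel \<Longrightarrow> y \<in> wedge_rel \<Longrightarrow> x + y \<in> wedge_rel"
  using wr_add[of x y] by (simp add: plus_fun_def)

lemma wr_uminus: "x \<in> wedge_rel \<Longrightarrow> - x \<in> wedge_rel"
  using wr_neg[of x] by (simp add: fun_Compl_def)

lemma wr_minus: "x \<in> wedge_rel \<Longrightarrow> y \<in> wedge_rel \<Longrightarrow> x - y \<in> wedge_rel"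
  using wr_plus[OF _ wr_uminus, of x y] by simp

lemma wr_scale: "x \<in> wedge_rel \<Longrightarrow> (\<lambda>p. k * x p) \<in> wedge_rel"
proof -
  assume x: "x \<in> wedge_rel"
  have nat_multiple: "(\<lambda>p. int n * x p) \<in> wedge_rel" for n
  proof (induction n)
    case 0
    show ?case using wr_zero by simp
  next
    case (Suc n)
    then have "(\<lambda>p. int n * x p + x p) \<in> wedge_rel" using wr_add[OF _ x] by simp
    then show ?case by (simp add: algebra_simps)
  qed
  show ?thesis
  proof (cases "0 \<le> k")
    case True
    then obtain n where "k = int n" using zero_le_imp_eq_int by blast
    then show ?thesis using nat_multiple by simp
  next
    case False
    then obtain n where "- k = int n" using zero_le_imp_eq_int[of "- k"] by auto
    then have "k = - int n" by simp
    then show ?thesis using wr_neg[OF nat_multiple[of n]] by simp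
  qed
qed

lemma wr_lincomb:
  assumes "finite S" and "\<And>t. t \<in> S \<Longrightarrow> x t \<in> wedge_rel"
  shows "(\<lambda>p. \<Sum>t\<in>S. k t * x t p) \<in> wedge_rel"
  using assms
proof (induction S rule: finite_induct)
  case empty
  show ?case using wr_zero by simp
next
  case (insert a S)
  then have "(\<lambda>p. k a * x a p + (\<Sum>t\<in>S. k t * x t p)) \<in> wedge_rel"
    using wr_add[OF wr_scale] by auto
  then show ?case using insert by simp
qed

definition weqv :: "wsum \<Rightarrow> wsum \<Rightarrow> bool" where
  "weqv x y \<longleftrightarrow> x - y \<in> wedge_rel"

lemma equivp_weqv: "equivp weqv"
proof (rule equivpI)
  show "reflp weqv" by (auto simp: reflp_def weqv_def wr_0)
  show "symp weqv" unfolding symp_def weqv_def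
    using wr_uminus by (metis minus_diff_eq)
  show "transp weqv" unfolding transp_def weqv_def
  proof (intro allI impI)
    fix x y z :: wsum
    assume "x - y \<in> wedge_rel" "y - z \<in> wedge_rel"
    then have "(x - y) + (y - z) \<in> wedge_rel" by (rule wr_plus)
    then show "x - z \<in> wedge_rel" by simp
  qed
qed

quotient_type wedge = wsum / weqv
  by (rule equivp_weqv)

instantiation wedge :: ab_group_add
begin

lift_definition zero_wedge :: wedge is "0::wsum" .

lift_definition plus_wedge :: "wedge \<Rightarrow> wedge \<Rightarrow> wedge" is "(+)"
proof -
  fix x x' y y' :: wsum
  assume "weqv x x'" "weqv y y'"
  then have "(x - x') + (y - y') \<in> wedge_rel" unfolding weqv_def by (rule wr_plus)
  then show "weqv (x + y) (x' + y')" unfolding weqv_def by (simp add: algebra_simps)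
qed

lift_definition uminus_wedge :: "wedge \<Rightarrow> wedge" is "uminus"
proof -
  fix x x' :: wsum
  assume "weqv x x'"
  then have "- (x - x') \<in> wedge_rel" unfolding weqv_def by (rule wr_uminus)
  then show "weqv (- x) (- x')" unfolding weqv_def by (simp add: algebra_simps)
qed

lift_definition minus_wedge :: "wedge \<Rightarrow> wedge \<Rightarrow> wedge" is "(-)"
proof -
  fix x x' y y' :: wsum
  assume "weqv x x'" "weqv y y'"
  then have "(x - x') - (y - y') \<in> wedge_rel" unfolding weqv_def by (rule wr_minus)
  then show "weqv (x - y) (x' - y')" unfolding weqv_def by (simp add: algebra_simps)
qed

instance
  by standard (transfer; simp add: weqv_def wr_0 algebra_simps)+

end

lemma wedge_eq_abs: "wedge_eq x y \<longleftrightarrow> abs_wedge x = abs_wedge y"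
proof -
  have "(\<lambda>p. x p - y p) = x - y" by (simp add: fun_eq_iff)
  then show ?thesis by (simp add: wedge_eq_def wedge.abs_eq_iff weqv_def)
qed

lemma abs_wedge_plus: "abs_wedge (x + y) = abs_wedge x + abs_wedge y"
  by (simp add: plus_wedge.abs_eq)

lemma abs_wedge_minus: "abs_wedge (x - y) = abs_wedge x - abs_wedge y"
  by (simp add: minus_wedge.abs_eq)

lift_definition W :: "complex \<Rightarrow> complex \<Rightarrow> wedge" is wg .

lemma abs_wedge_wg: "abs_wedge (wg a b) = W a b"
  by (simp add: W.abs_eq)

lemma W_additive_left: "Modules.additive (\<lambda>a. W a c)"
proof
  fix a b
  have "wedge_eq (wg (a + b) c) (wg a c + wg b c)"
    using wr_lin1[of a b c] by (simp add: wedge_eq_def diff_diff_eq)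
  then show "W (a + b) c = W a c + W b c"
    by (simp add: wedge_eq_abs abs_wedge_plus abs_wedge_wg)
qed

lemma W_additive_right: "Modules.additive (\<lambda>b. W a b)"
proof
  fix b c
  have "wedge_eq (wg a (b + c)) (wg a b + wg a c)"
    using wr_lin2[of a b c] by (simp add: wedge_eq_def diff_diff_eq)
  then show "W a (b + c) = W a b + W a c"
    by (simp add: wedge_eq_abs abs_wedge_plus abs_wedge_wg)
qed

lemma W_alt: "W a a = 0"
  by transfer (simp add: weqv_def wr_alt)

lemmas W_bilinear =
  Modules.additive.add[OF W_additive_left] Modules.additive.diff[OF W_additive_left]
  Modules.additive.add[OF W_additive_right] Modules.additive.diff[OF W_additive_right]

lemma W_swap: "W b a = - W a b"
proof -
  have "0 = W (a + b) (a + b)" by (simp add: W_alt)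
  also have "\<dots> = W a b + W b a" by (simp add: W_bilinear W_alt[of a] W_alt[of b] add.commute)
  finally have "W a b + W b a = 0" ..
  then show ?thesis by (rule minus_unique[symmetric])
qed

section \<open>The flattening identity in C \<wedge>_Z C\<close>

text \<open>With a..f standing for c01, c02, c03, c12, c13, c23, the wedge w0 \<wedge> w1 of the
  flattening equals the alternating sum of mu over the four faces (v1,v2,v3),
  (v0,v2,v3), (v0,v1,v3), (v0,v1,v2).\<close>

lemma flattening_wedge_identity:
  "W (c + d - b - e) (b + e - a - f) =
     (W d e - W d f + W e f) - (W b c - W b f + W c f) + (W a c - W a e + W c e)
     - (W a b - W a d + W b d)"
  by (simp add: W_bilinear W_alt W_swap[of b c] W_swap[of b d]
      W_swap[of a c] W_swap[of a d] W_swap[of a e] W_swap[of a b] W_swap[of b e]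
      W_swap[of c e] W_swap[of d e] algebra_simps)

section \<open>Linearity of mu and of the boundary\<close>

lemma mu_lin_superset:
  assumes "finite S" and "supp z \<subseteq> S"
  shows "mu_lin z p = (\<Sum>s\<in>S. z s * mu_tuple s p)"
  unfolding mu_lin_def
  by (rule sum.mono_neutral_left[OF assms]) (auto simp: supp_def)

lemma mu_lin_single: "mu_lin (single u) = mu_tuple u"
  by (simp add: mu_lin_def supp_def single_def fun_eq_iff)

lemma supp_lincomb:
  "supp (\<lambda>s. \<Sum>t\<in>S. k t * x t s) \<subseteq> (\<Union>t\<in>S. supp (x t))"
  by (auto simp: supp_def intro: sum.neutral)

lemma mu_lin_lincomb:
  assumes "finite S" and fin: "\<And>t. t \<in> S \<Longrightarrow> finite (supp (x t))"
  shows "mu_lin (\<lambda>s. \<Sum>t\<in>S. k t * x t s) = (\<lambda>p. \<Sum>t\<in>S. k t * mu_lin (x t) p)"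
proof
  fix p
  define U where "U = (\<Union>t\<in>S. supp (x t))"
  have "finite U" using assms by (simp add: U_def)
  have "supp (\<lambda>s. \<Sum>t\<in>S. k t * x t s) \<subseteq> U"
    unfolding U_def by (rule supp_lincomb)
  then have "mu_lin (\<lambda>s. \<Sum>t\<in>S. k t * x t s) p
      = (\<Sum>s\<in>U. (\<Sum>t\<in>S. k t * x t s) * mu_tuple s p)"
    by (rule mu_lin_superset[OF \<open>finite U\<close>])
  also have "\<dots> = (\<Sum>t\<in>S. k t * (\<Sum>s\<in>U. x t s * mu_tuple s p))"
    by (simp add: sum_distrib_right sum_distrib_left mult.assoc sum.swap[of _ U])
  also have "\<dots> = (\<Sum>t\<in>S. k t * mu_lin (x t) p)"
  proof (rule sum.cong[OF refl])
    fix t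
    assume "t \<in> S"
    then have "supp (x t) \<subseteq> U" by (auto simp: U_def)
    then show "k t * (\<Sum>s\<in>U. x t s * mu_tuple s p) = k t * mu_lin (x t) p"
      using mu_lin_superset[OF \<open>finite U\<close>] by simp
  qed
  finally show "mu_lin (\<lambda>s. \<Sum>t\<in>S. k t * x t s) p = (\<Sum>t\<in>S. k t * mu_lin (x t) p)" .
qed

lemma supp_single: "supp (single t) = {t}"
  by (auto simp: supp_def single_def)

lemma bd_single: "bd (single t) = (\<lambda>s. \<Sum>i<length t. (-1) ^ i * single (del_nth i t) s)"
  unfolding bd_def supp_single by (auto simp: single_def fun_eq_iff intro!: sum.cong)

lemma finite_supp_bd_single: "finite (supp (bd (single t)))"
  unfolding bd_single
  by (rule finite_subset[OF supp_lincomb]) (simp add: supp_def single_def)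

lemma bd_lincomb: "bd z = (\<lambda>s. \<Sum>t\<in>supp z. z t * bd (single t) s)"
  unfolding bd_single
  by (auto simp: bd_def single_def sum_distrib_left fun_eq_iff intro!: sum.cong)

lemma mu_bd_single:
  "mu_lin (bd (single t)) = (\<lambda>p. \<Sum>i<length t. (-1) ^ i * mu_tuple (del_nth i t) p)"
  unfolding bd_single by (simp add: mu_lin_lincomb supp_single mu_lin_single)

lemma mu_bd_lincomb:
  assumes "finite (supp z)"
  shows "mu_lin (bd z) = (\<lambda>p. \<Sum>t\<in>supp z. z t * mu_lin (bd (single t)) p)"
  by (subst bd_lincomb) (rule mu_lin_lincomb[OF assms finite_supp_bd_single])

section \<open>The first claim: nu \<circ> sigma_hat = mu \<circ> \<partial>\<close>

lemma mu_tuple3: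
  "mu_tuple [x, y, z] = wg (cc x y) (cc x z) - wg (cc x y) (cc y z) + wg (cc x z) (cc y z)"
  by (simp add: mu_tuple_def fun_eq_iff)

lemma nu_sigma_hat_eq_mu_bd:
  assumes "length t = 4"
  shows "wedge_eq (nu (sigma_hat t)) (mu_lin (bd (single t)))"
proof -
  obtain a b c d where t: "t = [a, b, c, d]"
    using assms by (auto simp: numeral_eq_Suc length_Suc_conv)
  have faces: "mu_lin (bd (single t)) =
      mu_tuple [b, c, d] - mu_tuple [a, c, d] + mu_tuple [a, b, d] - mu_tuple [a, b, c]"
    by (simp add: mu_bd_single t lessThan_nat_numeral del_nth_def fun_eq_iff)
  show ?thesis
    unfolding wedge_eq_abs faces mu_tuple3
    using flattening_wedge_identity[of "cc a d" "cc b c" "cc a c" "cc b d" "cc a b" "cc c d"]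
    by (simp add: nu_def sigma_hat_def t abs_wedge_plus abs_wedge_minus abs_wedge_wg)
qed

lemma nu_sigma_hat_eq_mu_bd_chain:
  assumes "finite (supp z)" and "\<forall>t\<in>supp z. length t = 4"
  shows "(\<lambda>p. (\<Sum>t\<in>supp z. z t * nu (sigma_hat t) p) - mu_lin (bd z) p) \<in> wedge_rel"
proof -
  have "(\<lambda>p. \<Sum>t\<in>supp z. z t * (nu (sigma_hat t) p - mu_lin (bd (single t)) p)) \<in> wedge_rel"
    using assms nu_sigma_hat_eq_mu_bd by (intro wr_lincomb) (auto simp: wedge_eq_def)
  then show ?thesis
    by (simp add: mu_bd_lincomb[OF assms(1)] right_diff_distrib sum_subtractf)
qed

section \<open>mu vanishes on the coinvariant relations\<close>

text \<open>The branch choice 0 \<le> arg < pi picks one of \<plusminus>z, so it does not depend on the sign of z.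
  Hence c_ij is well defined on V and, as det is SL(2,C)-invariant, G-invariant.\<close>

definition sign_normalise :: "complex \<Rightarrow> complex" where
  "sign_normalise z = (if 0 \<le> Arg z \<and> Arg z < pi then z else - z)"

lemma Arg_upper_half_iff:
  "(0 \<le> Arg z \<and> Arg z < pi) \<longleftrightarrow> 0 < Im z \<or> (Im z = 0 \<and> 0 \<le> Re z)"
  using Arg_less_0[of z] Arg_eq_pi[of z] Arg_bounded[of z] by (smt (verit))

lemma sign_normalise_uminus: "sign_normalise (- z) = sign_normalise z"
proof (cases "z = 0")
  case False
  then have "Re z \<noteq> 0 \<or> Im z \<noteq> 0" by (simp add: complex_eq_iff)
  then show ?thesis unfolding sign_normalise_def Arg_upper_half_iff by auto
qed simp

lemma cc_sign_normalise: "cc v w = Ln (sign_normalise (det2 v w))"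
  by (simp add: cc_def ndet_def sign_normalise_def)

lemma cc_vneg_left: "cc (vneg v) w = cc v w"
proof -
  have "det2 (vneg v) w = - det2 v w" by (simp add: det2_def vneg_def)
  then show ?thesis by (simp add: cc_sign_normalise sign_normalise_uminus)
qed

lemma cc_vneg_right: "cc v (vneg w) = cc v w"
proof -
  have "det2 v (vneg w) = - det2 v w" by (simp add: det2_def vneg_def algebra_simps)
  then show ?thesis by (simp add: cc_sign_normalise sign_normalise_uminus)
qed

lemma cc_act:
  assumes "g \<in> SL2"
  shows "cc (act g v) (act g w) = cc v w"
proof -
  obtain a b c d where g: "g = (a, b, c, d)" by (cases g) auto
  have "det2 (act g v) (act g w) = (a * d - b * c) * det2 v w"
    by (simp add: g act_def det2_def algebra_simps)
  with assms show ?thesis by (simp add: cc_sign_normalise g SL2_def)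
qed

lemma length3_cases:
  assumes "length t = 3"
  obtains x y z where "t = [x, y, z]"
  using assms by (auto simp: numeral_eq_Suc length_Suc_conv)

lemma mu_tuple_act: "length t = 3 \<Longrightarrow> g \<in> SL2 \<Longrightarrow> mu_tuple (map (act g) t) = mu_tuple t"
  by (elim length3_cases) (simp add: mu_tuple3 cc_act)

lemma mu_tuple_flip:
  assumes "length t = 3" and "i < length t"
  shows "mu_tuple (t[i := vneg (t ! i)]) = mu_tuple t"
proof -
  obtain x y z where t: "t = [x, y, z]" using assms(1) by (rule length3_cases)
  with assms(2) have "i = 0 \<or> i = 1 \<or> i = 2" by auto
  then show ?thesis
    by (auto simp: t mu_tuple3 cc_vneg_left cc_vneg_right numeral_2_eq_2)
qed

lemma mu_lin_add:
  assumes "finite (supp x)" and "finite (supp y)"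
  shows "mu_lin (\<lambda>s. x s + y s) = (\<lambda>p. mu_lin x p + mu_lin y p)"
proof
  fix p
  let ?S = "supp x \<union> supp y"
  have "finite ?S" using assms by simp
  then show "mu_lin (\<lambda>s. x s + y s) p = mu_lin x p + mu_lin y p"
    by (simp add: mu_lin_superset[of ?S] distrib_right sum.distrib supp_def subset_iff)
qed

lemma mu_lin_pair:
  assumes "mu_tuple t = mu_tuple u"
  shows "finite (supp (\<lambda>s. single t s - single u s))
    \<and> mu_lin (\<lambda>s. single t s - single u s) = (\<lambda>_. 0)"
proof -
  have supp_tu: "supp (\<lambda>s. single t s - single u s) \<subseteq> {t, u}"
    by (auto simp: supp_def single_def)
  have "mu_lin (\<lambda>s. single t s - single u s) p = 0" for p
    using mu_lin_superset[OF _ supp_tu, of p] assms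
    by (cases "t = u") (simp_all add: single_def)
  then show ?thesis using finite_subset[OF supp_tu] by auto
qed

lemma mu_lin_coinv_rel:
  "x \<in> coinv_rel 2 \<Longrightarrow> finite (supp x) \<and> mu_lin x = (\<lambda>_. 0)"
proof (induction x rule: coinv_rel.induct)
  case cr_zero
  show ?case by (simp add: supp_def mu_lin_def)
next
  case (cr_add x y)
  have "supp (\<lambda>s. x s + y s) \<subseteq> supp x \<union> supp y" by (auto simp: supp_def)
  with cr_add show ?case by (simp add: mu_lin_add finite_subset)
next
  case (cr_neg x)
  have "supp (\<lambda>s. - x s) = supp x" by (simp add: supp_def)
  moreover have "mu_lin (\<lambda>s. - x s) = (\<lambda>p. - mu_lin x p)"
    unfolding mu_lin_def supp_def by (simp add: sum_negf)
  ultimately show ?case using cr_neg by simp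
next
  case (cr_act t g)
  then show ?case by (intro mu_lin_pair) (simp add: mu_tuple_act hgen_def)
next
  case (cr_flip t i)
  then show ?case by (intro mu_lin_pair) (simp add: mu_tuple_flip hgen_def)
qed

theorem mainTheorem1:
  shows "(\<forall>t. hgen 3 t \<longrightarrow> wedge_eq (nu (sigma_hat t)) (mu_lin (bd (single t))))
    \<and> (\<forall>z. finite (supp z) \<and> (\<forall>t\<in>supp z. hgen 3 t) \<and> bd z \<in> coinv_rel 2
          \<longrightarrow> (\<lambda>p. \<Sum>t\<in>supp z. z t * nu (sigma_hat t) p) \<in> wedge_rel)"
proof (intro conjI allI impI)
  fix t
  assume "hgen 3 t"
  then show "wedge_eq (nu (sigma_hat t)) (mu_lin (bd (single t)))"
    by (intro nu_sigma_hat_eq_mu_bd) (simp add: hgen_def)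
next
  fix z
  assume z: "finite (supp z) \<and> (\<forall>t\<in>supp z. hgen 3 t) \<and> bd z \<in> coinv_rel 2"
  then have "(\<lambda>p. (\<Sum>t\<in>supp z. z t * nu (sigma_hat t) p) - mu_lin (bd z) p) \<in> wedge_rel"
    by (intro nu_sigma_hat_eq_mu_bd_chain) (auto simp: hgen_def)
  moreover have "mu_lin (bd z) = (\<lambda>_. 0)"
    using z mu_lin_coinv_rel by blast
  ultimately show "(\<lambda>p. \<Sum>t\<in>supp z. z t * nu (sigma_hat t) p) \<in> wedge_rel" by simp
qed

end
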